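(* Let $\theta_{OLS}\in\mathbb R$ and let $\{SB_0(\iota_0):\iota_0\in\mathcal I_0\}$ be a nonempty bounded set of real numbers indexed by a baseline information set $\mathcal I_0$; write $\underline s=\inf_{\iota_0\in\mathcal I_0}SB_0(\iota_0)$ and $\overline s=\sup_{\iota_0\in\mathcal I_0}SB_0(\iota_0)$. Let $\Lambda$ be the set of possible distributions of $SB_0(I_0)$, i.e. probability distributions supported on $\{SB_0(\iota_0):\iota_0\in\mathcal I_0\}$. For $\lambda\in\Lambda$ and a random variable $Z\sim\lambda$, let $SB_1(\lambda)$ be the optimal choice of $s\in\mathbb R$ for one of the following losses: (L1) $\mathbb E|s-Z|$, whose minimizer is a median of $\lambda$; (L2) $\big(\mathbb E[(s-Z)^2]\big)^{1/2}$, whose minimizer is the mean of $\lambda$; (L$\infty$) $\operatorname{ess\,sup}|s-Z|$, whose minimizer is the midpoint of the smallest closed interval containing the support of $\lambda$. Define $ATT_\lambda=\theta_{OLS}-SB_1(\lambda)$. Then for each of the three losses, $$\Big[\inf_{\lambda\in\Lambda}ATT_\lambda,\ \sup_{\lambda\in\Lambda}ATT_\lambda\Big]=\big[\theta_{OLS}-\overline s,\ \theta_{OLS}-\underline s\big].$$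
   Context: Background: in a two-period difference-in-differences setting, $\theta_{OLS}=\mathbb E[Y_1\mid D=1]-\mathbb E[Y_1\mid D=0]$ and $SB_0(\iota_0)=\mathbb E[Y_0\mid D=1,I_0=\iota_0]-\mathbb E[Y_0\mid D=0,I_0=\iota_0]$ is the baseline selection bias given information $\iota_0$. A decision maker picks the post-treatment selection bias $SB_1$ by minimizing a $p$-norm loss $\big(\mathbb E_{I_0}|SB_1-SB_0(I_0)|^p\big)^{1/p}$, $p\in\{1,2,\infty\}$, for a given distribution $\lambda$ of $SB_0(I_0)$; the interval $[\inf_\lambda ATT_\lambda,\sup_\lambda ATT_\lambda]$ is called the robust generalized DID bounds. *)

theory Defs
  imports "HOL-Probability.Probability"
begin

definition Lambda :: "real set \<Rightarrow> real measure set" where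
  "Lambda S = {M. prob_space M \<and> sets M = sets borel \<and> (AE z in M. z \<in> S)}"

datatype loss_kind = L1 | L2 | Linf

fun loss :: "loss_kind \<Rightarrow> real measure \<Rightarrow> real \<Rightarrow> ereal" where
  "loss L1 M s = ereal (integral\<^sup>L M (\<lambda>z. \<bar>s - z\<bar>))"
| "loss L2 M s = ereal (sqrt (integral\<^sup>L M (\<lambda>z. (s - z)^2)))"
| "loss Linf M s = esssup M (\<lambda>z. ereal \<bar>s - z\<bar>)"

definition optimal_SB1 :: "loss_kind \<Rightarrow> real measure \<Rightarrow> real \<Rightarrow> bool" where
  "optimal_SB1 k M s \<longleftrightarrow> (\<forall>t. loss k M s \<le> loss k M t)"

end

theory Submission
  imports Defs
begin

text \<open>If the distribution of SB0 is supported in [a, b] and s lies outside [a, b], moving s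
  to the nearest endpoint c lowers the distance to every point of the support by the same
  amount |s - c|; this strictly lowers each of the three losses, so every optimal SB1 lies
  in [a, b]. A point mass at s has s as its only optimum. Hence the values of SB1 over all
  admissible distributions contain the set of baseline selection biases and lie between its
  infimum and supremum, so they have the same infimum and supremum.\<close>

lemma esssup_add_const:
  fixes f :: "'a \<Rightarrow> ereal"
  assumes "emeasure M (space M) \<noteq> 0" and [measurable]: "f \<in> borel_measurable M"
  shows "esssup M (\<lambda>x. f x + ereal d) = esssup M f + ereal d"
proof (rule antisym)
  show "esssup M (\<lambda>x. f x + ereal d) \<le> esssup M f + ereal d"
    using esssup_add[of M f "\<lambda>_. ereal d"] esssup_const[OF assms(1), of "ereal d"] by simp
  have "esssup M f = esssup M (\<lambda>x. (f x + ereal d) + ereal (- d))"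
    by (simp add: add.assoc)
  also have "\<dots> \<le> esssup M (\<lambda>x. f x + ereal d) + ereal (- d)"
    using esssup_add[of M "\<lambda>x. f x + ereal d" "\<lambda>_. ereal (- d)"]
      esssup_const[OF assms(1), of "ereal (- d)"] by simp
  finally show "esssup M f + ereal d \<le> esssup M (\<lambda>x. f x + ereal d)"
    by (cases "esssup M (\<lambda>x. f x + ereal d)"; cases "esssup M f") auto
qed

lemma integrable_continuous_bounded_support:
  fixes f :: "real \<Rightarrow> real"
  assumes "finite_measure M" "sets M = sets borel" "AE z in M. z \<in> {a..b}"
    and "continuous_on UNIV f"
  shows "integrable M f"
proof -
  obtain B where B: "\<And>z. z \<in> {a..b} \<Longrightarrow> norm (f z) \<le> B"
    using compact_imp_bounded[OF compact_continuous_image[OF continuous_on_subset[OF assms(4)]]]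
    by (metis bounded_iff compact_Icc image_eqI subset_UNIV)
  have "f \<in> borel_measurable M"
    unfolding measurable_cong_sets[OF assms(2) refl] using assms(4)
    by (rule borel_measurable_continuous_onI)
  then show ?thesis
    using assms(1,3) B by (intro finite_measure.integrable_const_bound[where B=B]) auto
qed

lemma cInf_cSup_sandwich:
  fixes S V :: "'a :: conditionally_complete_linorder set"
  assumes "S \<subseteq> V" "V \<subseteq> {Inf S..Sup S}" "S \<noteq> {}"
  shows "Inf V = Inf S" and "Sup V = Sup S"
proof -
  have "V \<noteq> {}" using assms(1,3) by blast
  have "bdd_above V" by (rule bdd_above_mono[OF bdd_above_Icc assms(2)])
  have "bdd_below V" by (rule bdd_below_mono[OF bdd_below_Icc assms(2)])
  show "Inf V = Inf S"
  proof (rule antisym)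
    show "Inf V \<le> Inf S" by (rule cInf_superset_mono[OF assms(3) \<open>bdd_below V\<close> assms(1)])
    show "Inf S \<le> Inf V" by (rule cInf_greatest[OF \<open>V \<noteq> {}\<close>]) (use assms(2) in auto)
  qed
  show "Sup V = Sup S"
  proof (rule antisym)
    show "Sup S \<le> Sup V" by (rule cSup_subset_mono[OF assms(3) \<open>bdd_above V\<close> assms(1)])
    show "Sup V \<le> Sup S" by (rule cSup_least[OF \<open>V \<noteq> {}\<close>]) (use assms(2) in auto)
  qed
qed

lemma cInf_diff_image:
  fixes S :: "real set"
  assumes "S \<noteq> {}" "bdd_above S"
  shows "Inf ((\<lambda>s. t - s) ` S) = t - Sup S"
proof (rule antisym)
  have bdd: "bdd_below ((\<lambda>s. t - s) ` S)"
    using assms by (auto intro!: bdd_belowI[of _ "t - Sup S"] cSup_upper)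
  have "Sup S \<le> t - Inf ((\<lambda>s. t - s) ` S)"
  proof (rule cSup_least[OF assms(1)])
    fix s assume "s \<in> S"
    then have "Inf ((\<lambda>s. t - s) ` S) \<le> t - s" using bdd by (intro cInf_lower) auto
    then show "s \<le> t - Inf ((\<lambda>s. t - s) ` S)" by simp
  qed
  then show "Inf ((\<lambda>s. t - s) ` S) \<le> t - Sup S" by simp
  show "t - Sup S \<le> Inf ((\<lambda>s. t - s) ` S)"
    using assms by (auto intro!: cInf_greatest cSup_upper)
qed

lemma cSup_diff_image:
  fixes S :: "real set"
  assumes "S \<noteq> {}" "bdd_below S"
  shows "Sup ((\<lambda>s. t - s) ` S) = t - Inf S"
proof (rule antisym)
  show "Sup ((\<lambda>s. t - s) ` S) \<le> t - Inf S"
    using assms by (auto intro!: cSup_least cInf_lower)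
  have bdd: "bdd_above ((\<lambda>s. t - s) ` S)"
    using assms by (auto intro!: bdd_aboveI[of _ "t - Inf S"] cInf_lower)
  have "t - Sup ((\<lambda>s. t - s) ` S) \<le> Inf S"
  proof (rule cInf_greatest[OF assms(1)])
    fix s assume "s \<in> S"
    then have "t - s \<le> Sup ((\<lambda>s. t - s) ` S)" using bdd by (intro cSup_upper) auto
    then show "t - Sup ((\<lambda>s. t - s) ` S) \<le> s" by simp
  qed
  then show "t - Inf S \<le> Sup ((\<lambda>s. t - s) ` S)" by simp
qed

lemma loss_less_if_uniformly_closer:
  assumes "prob_space M" and sets_M: "sets M = sets borel"
    and support: "AE z in M. z \<in> {a..b}"
    and closer: "AE z in M. \<bar>x - z\<bar> = \<bar>c - z\<bar> + d" and "0 < d"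
  shows "loss k M c < loss k M x"
proof -
  interpret prob_space M by fact
  have measurable_M: "borel_measurable M = borel_measurable borel"
    using measurable_cong_sets[OF sets_M refl] .
  have integrable: "integrable M f" if "continuous_on UNIV f" for f :: "real \<Rightarrow> real"
    using integrable_continuous_bounded_support[OF finite_measure_axioms sets_M support that] .
  show ?thesis
  proof (cases k)
    case L1
    have "(\<integral>z. \<bar>x - z\<bar> \<partial>M) = (\<integral>z. \<bar>c - z\<bar> + d \<partial>M)"
      using closer by (intro integral_cong_AE) (simp_all add: measurable_M)
    also have "\<dots> = (\<integral>z. \<bar>c - z\<bar> \<partial>M) + d"
      by (simp add: integrable continuous_intros prob_space)
    finally show ?thesis using L1 \<open>0 < d\<close> by simp
  next
    case L2
    have "(\<integral>z. (c - z)\<^sup>2 \<partial>M) + d\<^sup>2 = (\<integral>z. (c - z)\<^sup>2 + d\<^sup>2 \<partial>M)"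
      by (simp add: integrable continuous_intros prob_space)
    also have "\<dots> \<le> (\<integral>z. (x - z)\<^sup>2 \<partial>M)"
    proof (intro integral_mono_AE integrable continuous_intros)
      show "AE z in M. (c - z)\<^sup>2 + d\<^sup>2 \<le> (x - z)\<^sup>2"
        using closer
      proof eventually_elim
        case (elim z)
        have "(x - z)\<^sup>2 = (\<bar>c - z\<bar> + d)\<^sup>2" by (metis elim power2_abs)
        also have "\<dots> = (c - z)\<^sup>2 + d\<^sup>2 + 2 * d * \<bar>c - z\<bar>"
          by (simp add: power2_eq_square algebra_simps)
        finally show ?case using \<open>0 < d\<close> by simp
      qed
    qed
    finally have "(\<integral>z. (c - z)\<^sup>2 \<partial>M) + d\<^sup>2 \<le> (\<integral>z. (x - z)\<^sup>2 \<partial>M)" .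
    moreover have "0 < d\<^sup>2" using \<open>0 < d\<close> by simp
    ultimately have "(\<integral>z. (c - z)\<^sup>2 \<partial>M) < (\<integral>z. (x - z)\<^sup>2 \<partial>M)" by linarith
    then show ?thesis using L2 by simp
  next
    case Linf
    have bounded: "esssup M (\<lambda>z. ereal \<bar>c - z\<bar>) \<le> ereal (\<bar>c\<bar> + \<bar>a\<bar> + \<bar>b\<bar>)"
      using support by (intro esssup_I) (auto simp: measurable_M)
    have nonneg: "0 \<le> esssup M (\<lambda>z. ereal \<bar>c - z\<bar>)"
      using esssup_mono[of "\<lambda>_. 0 :: ereal" M "\<lambda>z. ereal \<bar>c - z\<bar>"]
        esssup_const[of M "0 :: ereal"]
      by (simp add: emeasure_space_1)
    have "esssup M (\<lambda>z. ereal \<bar>x - z\<bar>) = esssup M (\<lambda>z. ereal \<bar>c - z\<bar> + ereal d)"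
      using closer by (intro esssup_AE_cong) (auto simp: measurable_M)
    also have "\<dots> = esssup M (\<lambda>z. ereal \<bar>c - z\<bar>) + ereal d"
      by (rule esssup_add_const) (simp_all add: emeasure_space_1 measurable_M)
    finally show ?thesis
      using Linf bounded nonneg \<open>0 < d\<close>
      by (cases "esssup M (\<lambda>z. ereal \<bar>c - z\<bar>)") auto
  qed
qed

lemma optimal_SB1_mem_support_interval:
  assumes "prob_space M" "sets M = sets borel" and support: "AE z in M. z \<in> {a..b}"
    and "optimal_SB1 k M x"
  shows "x \<in> {a..b}"
proof (rule ccontr)
  have not_less: "\<not> loss k M c < loss k M x" for c
    using \<open>optimal_SB1 k M x\<close> unfolding optimal_SB1_def by (simp add: not_less)
  assume "x \<notin> {a..b}"
  then consider "b < x" | "x < a" by fastforce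
  then show False
  proof cases
    case 1
    have "AE z in M. \<bar>x - z\<bar> = \<bar>b - z\<bar> + (x - b)"
      using support by eventually_elim (use 1 in auto)
    then have "loss k M b < loss k M x"
      by (rule loss_less_if_uniformly_closer[OF assms(1,2) support]) (use 1 in simp)
    with not_less show False by blast
  next
    case 2
    have "AE z in M. \<bar>x - z\<bar> = \<bar>a - z\<bar> + (a - x)"
      using support by eventually_elim (use 2 in auto)
    then have "loss k M a < loss k M x"
      by (rule loss_less_if_uniformly_closer[OF assms(1,2) support]) (use 2 in simp)
    with not_less show False by blast
  qed
qed

lemma optimal_SB1_mem_Icc_Inf_Sup:
  assumes "M \<in> Lambda S" "S \<noteq> {}" "bdd_above S" "bdd_below S" "optimal_SB1 k M x"
  shows "x \<in> {Inf S..Sup S}"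
proof -
  have "prob_space M" "sets M = sets borel" "AE z in M. z \<in> S"
    using \<open>M \<in> Lambda S\<close> unfolding Lambda_def by auto
  moreover have "AE z in M. z \<in> {Inf S..Sup S}"
    using \<open>AE z in M. z \<in> S\<close> by eventually_elim (auto intro: cInf_lower cSup_upper assms)
  ultimately show ?thesis
    using optimal_SB1_mem_support_interval \<open>optimal_SB1 k M x\<close> by blast
qed

lemma return_in_Lambda:
  assumes "s \<in> S"
  shows "return borel s \<in> Lambda S"
proof -
  have "AE z in return borel s. z = s"
    by (simp add: AE_return)
  then have "AE z in return borel s. z \<in> S"
    by eventually_elim (use assms in simp)
  then show ?thesis
    unfolding Lambda_def by (simp add: prob_space_return)
qed

lemma optimal_SB1_return: "optimal_SB1 k (return borel s) x \<Longrightarrow> x = s"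
  using optimal_SB1_mem_Icc_Inf_Sup[OF return_in_Lambda[of s "{s}"]] by simp

theorem lemma1:
  fixes theta_OLS :: real and SB0 :: "'i \<Rightarrow> real" and I0 :: "'i set"
    and k :: loss_kind and SB1 :: "real measure \<Rightarrow> real"
  assumes "I0 \<noteq> {}"
    and "bdd_above (SB0 ` I0)" and "bdd_below (SB0 ` I0)"
    and "\<forall>M \<in> Lambda (SB0 ` I0). optimal_SB1 k M (SB1 M)"
  shows "{Inf ((\<lambda>M. theta_OLS - SB1 M) ` Lambda (SB0 ` I0)) ..
          Sup ((\<lambda>M. theta_OLS - SB1 M) ` Lambda (SB0 ` I0))}
       = {theta_OLS - Sup (SB0 ` I0) .. theta_OLS - Inf (SB0 ` I0)}"
proof -
  define S where "S = SB0 ` I0"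
  define T where "T = (\<lambda>s. theta_OLS - s) ` S"
  define ATT where "ATT = (\<lambda>M. theta_OLS - SB1 M) ` Lambda S"
  have S: "S \<noteq> {}" "bdd_above S" "bdd_below S"
    using assms(1-3) unfolding S_def by auto
  have Inf_T: "Inf T = theta_OLS - Sup S" and Sup_T: "Sup T = theta_OLS - Inf S"
    unfolding T_def using S by (simp_all add: cInf_diff_image cSup_diff_image)
  have SB1: "optimal_SB1 k M (SB1 M)" if "M \<in> Lambda S" for M
    using assms(4) that unfolding S_def by blast
  have "ATT \<subseteq> {Inf T..Sup T}"
    unfolding ATT_def Inf_T Sup_T using optimal_SB1_mem_Icc_Inf_Sup[OF _ S SB1] by fastforce
  moreover have "T \<subseteq> ATT"
  proof
    fix v assume "v \<in> T"
    then obtain s where "s \<in> S" "v = theta_OLS - s" unfolding T_def by blast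
    then have "return borel s \<in> Lambda S" "SB1 (return borel s) = s"
      using return_in_Lambda optimal_SB1_return SB1 by blast+
    then show "v \<in> ATT" unfolding ATT_def using \<open>v = theta_OLS - s\<close> by force
  qed
  moreover have "T \<noteq> {}" unfolding T_def using S by blast
  ultimately have "Inf ATT = Inf T" "Sup ATT = Sup T"
    using cInf_cSup_sandwich by blast+
  then show ?thesis unfolding ATT_def S_def Inf_T Sup_T by simp
qed

end
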